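(* If $\gamma\in N(x_v^{-1})$, then $v^{-1}(\gamma) \in \Phi^- \setminus \Delta^-$.
   Context: Let $G$ be a complex linear reductive algebraic group with Borel subgroup $B$, maximal torus $T\subset B$, Weyl group $W$, root system $\Phi$ with positive roots $\Phi^+$, negative roots $\Phi^-$, simple roots $\Delta$, and negative simple roots $\Delta^-=-\Delta$. For $w\in W$ let $N(w)=\{\gamma\in\Phi^+ : w(\gamma)\in\Phi^-\}$ be its inversion set. Let $S\in\mathfrak{h}$ (the Lie algebra of $T$) be a non-regular semisimple element and $M=Z_G(S)$, assumed to be a standard Levi subgroup with positive roots $\Phi_M^+$, and let ${^M W}=\{v\in W : N(v^{-1})\subseteq \Phi^+\setminus\Phi_M^+\}$. Fix $v\in {^M W}$, let $R(v)=N(v)\cap\Delta$, and let $L=L_v$ be the standard Levi subgroup with simple roots $\Delta_L=R(v)$, Weyl group $W_L$, positive roots $\Phi_L^+$ and negative roots $\Phi_L^-$. Let $w_v$ be the longest element of $W_L$ and write $v=x_vw_v$ with $x_v\in W^L=\{w\in W : N(w)\subseteq\Phi^+\setminus\Phi_L^+\}$ and $\ell(v)=\ell(x_v)+\ell(w_v)$ (this decomposition exists and is unique). *)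

theory Defs
  imports "HOL-Analysis.Analysis"
begin

text \<open>Roots live in a finite-dimensional real inner product space (real form of the dual
  of the Cartan subalgebra).  Reflection in the hyperplane orthogonal to a root.\<close>
definition rrefl :: "'a::euclidean_space \<Rightarrow> 'a \<Rightarrow> 'a" where
  "rrefl \<alpha> x = x - (2 * (x \<bullet> \<alpha>) / (\<alpha> \<bullet> \<alpha>)) *\<^sub>R \<alpha>"

text \<open>Reduced crystallographic root system (not necessarily spanning, as for reductive groups).\<close>
definition root_system :: "'a::euclidean_space set \<Rightarrow> bool" where
  "root_system \<Phi> \<longleftrightarrow> finite \<Phi> \<and> 0 \<notin> \<Phi>
     \<and> (\<forall>\<alpha>\<in>\<Phi>. rrefl \<alpha> ` \<Phi> \<subseteq> \<Phi>)
     \<and> (\<forall>\<alpha>\<in>\<Phi>. \<forall>\<beta>\<in>\<Phi>. 2 * (\<beta> \<bullet> \<alpha>) / (\<alpha> \<bullet> \<alpha>) \<in> \<int>)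
     \<and> (\<forall>\<alpha>\<in>\<Phi>. \<forall>c. c *\<^sub>R \<alpha> \<in> \<Phi> \<longrightarrow> c = 1 \<or> c = -1)"

definition nonneg_comb :: "'a::euclidean_space set \<Rightarrow> 'a \<Rightarrow> bool" where
  "nonneg_comb D \<beta> \<longleftrightarrow> (\<exists>c::'a \<Rightarrow> nat. \<beta> = (\<Sum>\<alpha>\<in>D. real (c \<alpha>) *\<^sub>R \<alpha>))"

definition simple_system :: "'a::euclidean_space set \<Rightarrow> 'a set \<Rightarrow> bool" where
  "simple_system \<Phi> \<Delta> \<longleftrightarrow> \<Delta> \<subseteq> \<Phi> \<and> independent \<Delta>
     \<and> (\<forall>\<beta>\<in>\<Phi>. nonneg_comb \<Delta> \<beta> \<or> nonneg_comb \<Delta> (-\<beta>))"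

definition pos_roots :: "'a::euclidean_space set \<Rightarrow> 'a set \<Rightarrow> 'a set" where
  "pos_roots \<Phi> \<Delta> = {\<beta>\<in>\<Phi>. nonneg_comb \<Delta> \<beta>}"

definition neg_roots :: "'a::euclidean_space set \<Rightarrow> 'a set \<Rightarrow> 'a set" where
  "neg_roots \<Phi> \<Delta> = uminus ` pos_roots \<Phi> \<Delta>"

definition levi_pos_roots :: "'a::euclidean_space set \<Rightarrow> 'a set \<Rightarrow> 'a set \<Rightarrow> 'a set" where
  "levi_pos_roots \<Phi> \<Delta> J = {\<beta>\<in>pos_roots \<Phi> \<Delta>. \<beta> \<in> span J}"

inductive_set refl_group :: "'a::euclidean_space set \<Rightarrow> ('a \<Rightarrow> 'a) set" for R where
  id_in: "id \<in> refl_group R"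
| step: "w \<in> refl_group R \<Longrightarrow> \<alpha> \<in> R \<Longrightarrow> rrefl \<alpha> \<circ> w \<in> refl_group R"

definition inv_set :: "'a::euclidean_space set \<Rightarrow> 'a set \<Rightarrow> ('a \<Rightarrow> 'a) \<Rightarrow> 'a set" where
  "inv_set \<Phi> \<Delta> w = {\<gamma>\<in>pos_roots \<Phi> \<Delta>. w \<gamma> \<in> neg_roots \<Phi> \<Delta>}"

definition wlen :: "'a::euclidean_space set \<Rightarrow> 'a set \<Rightarrow> ('a \<Rightarrow> 'a) \<Rightarrow> nat" where
  "wlen \<Phi> \<Delta> w = card (inv_set \<Phi> \<Delta> w)"

text \<open>Minimal coset representatives: left (for M) and right (for L).\<close>
definition left_min_reps :: "'a::euclidean_space set \<Rightarrow> 'a set \<Rightarrow> 'a set \<Rightarrow> ('a \<Rightarrow> 'a) set" where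
  "left_min_reps \<Phi> \<Delta> J = {v\<in>refl_group \<Phi>.
       inv_set \<Phi> \<Delta> (inv v) \<subseteq> pos_roots \<Phi> \<Delta> - levi_pos_roots \<Phi> \<Delta> J}"

definition right_min_reps :: "'a::euclidean_space set \<Rightarrow> 'a set \<Rightarrow> 'a set \<Rightarrow> ('a \<Rightarrow> 'a) set" where
  "right_min_reps \<Phi> \<Delta> J = {w\<in>refl_group \<Phi>.
       inv_set \<Phi> \<Delta> w \<subseteq> pos_roots \<Phi> \<Delta> - levi_pos_roots \<Phi> \<Delta> J}"

end

theory Submission
  imports Defs
begin

(* Put \<delta> = v\<inverse>\<gamma> and \<beta> = -x\<^sub>v\<inverse>\<gamma>. Then \<beta> \<in> N(x\<^sub>v), so \<beta> is a positive root outside the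
   span of J = R(v). Since w\<^sub>v \<delta> = -\<beta> and every element of W\<^sub>L moves vectors only by elements
   of span J, \<delta> + \<beta> \<in> span J. Comparing coefficients of the simple roots outside J, \<delta> cannot
   be a nonnegative combination of simple roots, so \<delta> is negative; and \<delta> = -\<alpha> with \<alpha> simple
   would give v \<alpha> = -\<gamma> < 0, i.e. \<alpha> \<in> J, forcing \<beta> \<in> span J. *)

lemma rrefl_rrefl: "rrefl \<alpha> (rrefl \<alpha> x) = x"
proof (cases "\<alpha> = 0")
  case True
  then show ?thesis by (simp add: rrefl_def)
next
  case False
  then have "rrefl \<alpha> x \<bullet> \<alpha> = - (x \<bullet> \<alpha>)"
    by (simp add: rrefl_def inner_diff_left algebra_simps)
  with False show ?thesis by (simp add: rrefl_def algebra_simps)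
qed

lemma linear_rrefl: "linear (rrefl \<alpha>)"
  unfolding rrefl_def
  by (rule linearI) (auto simp: inner_add_left algebra_simps add_divide_distrib scaleR_add_left)

lemma rrefl_self: "\<alpha> \<noteq> 0 \<Longrightarrow> rrefl \<alpha> \<alpha> = - \<alpha>"
  by (simp add: rrefl_def scaleR_2 algebra_simps)

lemma root_system_uminus:
  assumes "root_system \<Phi>" "\<alpha> \<in> \<Phi>"
  shows "- \<alpha> \<in> \<Phi>"
  using assms rrefl_self[of \<alpha>] unfolding root_system_def by (metis image_subset_iff)

lemma linear_inj_refl_group:
  assumes "w \<in> refl_group R"
  shows "linear w \<and> inj w"
  using assms
proof (induction rule: refl_group.induct)
  case id_in
  then show ?case by (simp add: bounded_linear.linear)
next
  case (step w \<alpha>)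
  have "inj (rrefl \<alpha>)" by (metis injI rrefl_rrefl)
  with step show ?case using linear_rrefl linear_compose inj_compose by blast
qed

lemma refl_group_image_subset:
  assumes "w \<in> refl_group R" "R \<subseteq> \<Phi>" "root_system \<Phi>"
  shows "w ` \<Phi> \<subseteq> \<Phi>"
  using assms
proof (induction rule: refl_group.induct)
  case (step w \<alpha>)
  then show ?case unfolding root_system_def by (auto simp: image_subset_iff)
qed simp

lemma refl_group_image_eq:
  assumes "w \<in> refl_group \<Phi>" "root_system \<Phi>"
  shows "w ` \<Phi> = \<Phi>"
proof (rule endo_inj_surj)
  show "finite \<Phi>" using assms(2) unfolding root_system_def by blast
  show "w ` \<Phi> \<subseteq> \<Phi>" using refl_group_image_subset[OF assms(1) subset_refl assms(2)] .
  show "inj_on w \<Phi>" using linear_inj_refl_group[OF assms(1)] inj_on_subset by blast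
qed

lemma refl_group_inv_apply:
  assumes "w \<in> refl_group \<Phi>" "root_system \<Phi>" "\<gamma> \<in> \<Phi>"
  shows "inv w \<gamma> \<in> \<Phi>" "w (inv w \<gamma>) = \<gamma>"
proof -
  have "\<gamma> \<in> w ` \<Phi>" using refl_group_image_eq[OF assms(1,2)] assms(3) by simp
  then obtain \<delta> where "\<delta> \<in> \<Phi>" "\<gamma> = w \<delta>" by blast
  moreover have "inj w" using linear_inj_refl_group[OF assms(1)] by blast
  ultimately show "inv w \<gamma> \<in> \<Phi>" "w (inv w \<gamma>) = \<gamma>" by simp_all
qed

lemma refl_group_diff_in_span:
  assumes "w \<in> refl_group R"
  shows "w x - x \<in> span R"
  using assms
proof (induction rule: refl_group.induct)
  case id_in
  then show ?case by (simp add: span_zero)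
next
  case (step w \<alpha>)
  have "(rrefl \<alpha> \<circ> w) x - x = (w x - x) - (2 * (w x \<bullet> \<alpha>) / (\<alpha> \<bullet> \<alpha>)) *\<^sub>R \<alpha>"
    by (simp add: rrefl_def)
  moreover have "(w x - x) - (2 * (w x \<bullet> \<alpha>) / (\<alpha> \<bullet> \<alpha>)) *\<^sub>R \<alpha> \<in> span R"
    using step by (simp add: span_diff span_scale span_base)
  ultimately show ?case by metis
qed

lemma coeff_eq_0_if_sum_in_span:
  fixes D J :: "'a::euclidean_space set"
  assumes "finite D" "independent D" "J \<subseteq> D"
    and "(\<Sum>x\<in>D. c x *\<^sub>R x) \<in> span J" "a \<in> D" "a \<notin> J"
  shows "c a = 0"
proof -
  obtain f :: "'a \<Rightarrow> real" where f: "linear f" "\<And>x. x \<in> D \<Longrightarrow> f x = (if x = a then 1 else 0)"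
    using linear_independent_extend[OF assms(2), of "\<lambda>x. if x = a then 1 else 0"] by auto
  have "f (\<Sum>x\<in>D. c x *\<^sub>R x) = 0"
  proof (rule linear_eq_0_on_span[OF f(1) _ assms(4)])
    show "f x = 0" if "x \<in> J" for x using that f(2) assms(3,6) by auto
  qed
  moreover have "f (\<Sum>x\<in>D. c x *\<^sub>R x) = (\<Sum>x\<in>D. c x * f x)"
    by (simp add: linear_sum[OF f(1)] linear_scale[OF f(1)])
  moreover have "\<dots> = (\<Sum>x\<in>D. if x = a then c x else 0)"
    using f(2) by (intro sum.cong) auto
  ultimately show ?thesis using assms(1,5) by simp
qed

lemma nonneg_comb_add_in_span:
  fixes D J :: "'a::euclidean_space set"
  assumes "finite D" "independent D" "J \<subseteq> D"
    and "nonneg_comb D \<delta>" "nonneg_comb D \<beta>" "\<delta> + \<beta> \<in> span J"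
  shows "\<beta> \<in> span J"
proof -
  obtain c b :: "'a \<Rightarrow> nat" where c: "\<delta> = (\<Sum>x\<in>D. real (c x) *\<^sub>R x)"
    and b: "\<beta> = (\<Sum>x\<in>D. real (b x) *\<^sub>R x)"
    using assms(4,5) unfolding nonneg_comb_def by blast
  have "\<delta> + \<beta> = (\<Sum>x\<in>D. (real (c x) + real (b x)) *\<^sub>R x)"
    unfolding b c by (simp add: scaleR_add_left sum.distrib)
  with assms(6) have sum_in_span: "(\<Sum>x\<in>D. (real (c x) + real (b x)) *\<^sub>R x) \<in> span J"
    by simp
  have b_zero: "b x = 0" if "x \<in> D" "x \<notin> J" for x
  proof -
    have "real (c x) + real (b x) = 0"
      by (rule coeff_eq_0_if_sum_in_span[OF assms(1-3) sum_in_span that])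
    then show ?thesis by simp
  qed
  have term_in_span: "real (b x) *\<^sub>R x \<in> span J" if "x \<in> D" for x
  proof (cases "x \<in> J")
    case True
    then show ?thesis by (simp add: span_base span_scale)
  next
    case False
    then show ?thesis using that b_zero by (simp add: span_zero)
  qed
  then show ?thesis unfolding b by (rule span_sum)
qed

lemma nonneg_comb_elem:
  assumes "finite D" "\<alpha> \<in> D"
  shows "nonneg_comb D \<alpha>"
  unfolding nonneg_comb_def
proof (rule exI[where x = "\<lambda>x. if x = \<alpha> then 1 else 0"])
  have "(\<Sum>x\<in>D. real (if x = \<alpha> then 1 else 0) *\<^sub>R x) = (\<Sum>x\<in>D. if x = \<alpha> then x else 0)"
    by (intro sum.cong) auto
  also have "\<dots> = \<alpha>" using assms by simp
  finally show "\<alpha> = (\<Sum>x\<in>D. real (if x = \<alpha> then 1 else 0) *\<^sub>R x)" by simp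
qed

lemma finite_simple_system:
  assumes "root_system \<Phi>" "simple_system \<Phi> \<Delta>"
  shows "finite \<Delta>"
proof (rule finite_subset)
  show "\<Delta> \<subseteq> \<Phi>" using assms(2) unfolding simple_system_def by blast
  show "finite \<Phi>" using assms(1) unfolding root_system_def by blast
qed

lemma simple_root_in_pos_roots:
  assumes "root_system \<Phi>" "simple_system \<Phi> \<Delta>" "\<alpha> \<in> \<Delta>"
  shows "\<alpha> \<in> pos_roots \<Phi> \<Delta>"
proof -
  have "\<alpha> \<in> \<Phi>" using assms(2,3) unfolding simple_system_def by blast
  moreover have "nonneg_comb \<Delta> \<alpha>"
    using nonneg_comb_elem[OF finite_simple_system[OF assms(1,2)] assms(3)] .
  ultimately show ?thesis unfolding pos_roots_def by blast
qed

lemma neg_roots_if_not_nonneg_comb: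
  assumes "root_system \<Phi>" "simple_system \<Phi> \<Delta>" "\<delta> \<in> \<Phi>" "\<not> nonneg_comb \<Delta> \<delta>"
  shows "\<delta> \<in> neg_roots \<Phi> \<Delta>"
proof -
  have "nonneg_comb \<Delta> (- \<delta>)" using assms(2-4) unfolding simple_system_def by blast
  with root_system_uminus[OF assms(1,3)] have "- \<delta> \<in> pos_roots \<Phi> \<Delta>"
    unfolding pos_roots_def by blast
  then show ?thesis unfolding neg_roots_def by (metis image_eqI minus_minus)
qed

lemma minus_inv_apply_in_inv_set:
  assumes "w \<in> refl_group \<Phi>" "root_system \<Phi>" "\<gamma> \<in> inv_set \<Phi> \<Delta> (inv w)"
  shows "- inv w \<gamma> \<in> inv_set \<Phi> \<Delta> w"
proof -
  have \<gamma>_pos: "\<gamma> \<in> pos_roots \<Phi> \<Delta>" and "inv w \<gamma> \<in> neg_roots \<Phi> \<Delta>"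
    using assms(3) unfolding inv_set_def by blast+
  then have "- inv w \<gamma> \<in> pos_roots \<Phi> \<Delta>" unfolding neg_roots_def by auto
  moreover have "w (- inv w \<gamma>) = - w (inv w \<gamma>)"
    using linear_neg linear_inj_refl_group[OF assms(1)] by blast
  moreover have "w (inv w \<gamma>) = \<gamma>"
    using refl_group_inv_apply(2)[OF assms(1,2)] \<gamma>_pos unfolding pos_roots_def by blast
  moreover have "- \<gamma> \<in> neg_roots \<Phi> \<Delta>" using \<gamma>_pos unfolding neg_roots_def by blast
  ultimately show ?thesis unfolding inv_set_def by simp
qed

lemma neg_root_if_add_pos_root_in_span:
  assumes "root_system \<Phi>" "simple_system \<Phi> \<Delta>" "J \<subseteq> \<Delta>" "\<delta> \<in> \<Phi>"
    and "\<beta> \<in> pos_roots \<Phi> \<Delta>" "\<beta> \<notin> span J" "\<delta> + \<beta> \<in> span J"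
  shows "\<delta> \<in> neg_roots \<Phi> \<Delta> - uminus ` J"
proof
  have "independent \<Delta>" using assms(2) unfolding simple_system_def by blast
  moreover have "nonneg_comb \<Delta> \<beta>" using assms(5) unfolding pos_roots_def by blast
  ultimately have "\<not> nonneg_comb \<Delta> \<delta>"
    using nonneg_comb_add_in_span[OF finite_simple_system[OF assms(1,2)] _ assms(3) _ _ assms(7)] assms(6)
    by blast
  then show "\<delta> \<in> neg_roots \<Phi> \<Delta>" by (rule neg_roots_if_not_nonneg_comb[OF assms(1,2,4)])
  show "\<delta> \<notin> uminus ` J"
  proof
    assume "\<delta> \<in> uminus ` J"
    then obtain \<alpha> where "\<alpha> \<in> J" "\<delta> = - \<alpha>" by blast
    then have "\<delta> \<in> span J" by (simp add: span_neg span_base)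
    then have "(\<delta> + \<beta>) - \<delta> \<in> span J" using assms(7) span_diff by blast
    with assms(6) show False by simp
  qed
qed

theorem mainTheorem1:
  fixes \<Phi> \<Delta> \<Delta>M :: "'a::euclidean_space set"
    and v xv wv :: "'a \<Rightarrow> 'a"
    and \<gamma> :: 'a
  assumes rs: "root_system \<Phi>"
    and ss: "simple_system \<Phi> \<Delta>"
    and M_std: "\<Delta>M \<subseteq> \<Delta>"
    and S_nonreg: "\<Delta>M \<noteq> {}"
    and v_in: "v \<in> left_min_reps \<Phi> \<Delta> \<Delta>M"
    and wv_in: "wv \<in> refl_group (inv_set \<Phi> \<Delta> v \<inter> \<Delta>)"
    and wv_longest: "\<forall>u\<in>refl_group (inv_set \<Phi> \<Delta> v \<inter> \<Delta>). wlen \<Phi> \<Delta> u \<le> wlen \<Phi> \<Delta> wv"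
    and xv_in: "xv \<in> right_min_reps \<Phi> \<Delta> (inv_set \<Phi> \<Delta> v \<inter> \<Delta>)"
    and decomp: "v = xv \<circ> wv"
    and len: "wlen \<Phi> \<Delta> v = wlen \<Phi> \<Delta> xv + wlen \<Phi> \<Delta> wv"
    and \<gamma>_in: "\<gamma> \<in> inv_set \<Phi> \<Delta> (inv xv)"
  shows "inv v \<gamma> \<in> neg_roots \<Phi> \<Delta> - uminus ` \<Delta>"
proof -
  define J where "J = inv_set \<Phi> \<Delta> v \<inter> \<Delta>"
  define \<delta> where "\<delta> = inv v \<gamma>"
  define \<beta> where "\<beta> = - inv xv \<gamma>"
  have v_W: "v \<in> refl_group \<Phi>" and xv_W: "xv \<in> refl_group \<Phi>"
    using v_in xv_in unfolding left_min_reps_def right_min_reps_def by blast+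
  have \<gamma>_pos: "\<gamma> \<in> pos_roots \<Phi> \<Delta>" using \<gamma>_in unfolding inv_set_def by blast
  then have \<delta>_root: "\<delta> \<in> \<Phi>" and v\<delta>: "v \<delta> = \<gamma>"
    using refl_group_inv_apply[OF v_W rs] unfolding \<delta>_def pos_roots_def by auto
  have \<beta>_inv: "\<beta> \<in> inv_set \<Phi> \<Delta> xv"
    unfolding \<beta>_def using minus_inv_apply_in_inv_set[OF xv_W rs \<gamma>_in] .
  then have \<beta>_pos: "\<beta> \<in> pos_roots \<Phi> \<Delta>" and \<beta>_J: "\<beta> \<notin> span J"
    using xv_in unfolding inv_set_def right_min_reps_def levi_pos_roots_def J_def by blast+
  have "xv (wv \<delta>) = xv (inv xv \<gamma>)"
    using v\<delta> decomp refl_group_inv_apply[OF xv_W rs] \<gamma>_pos unfolding pos_roots_def by auto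
  then have "wv \<delta> = - \<beta>" using linear_inj_refl_group[OF xv_W] unfolding \<beta>_def by (simp add: inj_eq)
  then have "\<delta> + \<beta> \<in> span J"
    using span_neg[OF refl_group_diff_in_span[OF wv_in, of \<delta>]] unfolding J_def by simp
  then have \<delta>_neg: "\<delta> \<in> neg_roots \<Phi> \<Delta> - uminus ` J"
    using neg_root_if_add_pos_root_in_span[OF rs ss _ \<delta>_root \<beta>_pos \<beta>_J] J_def by blast
  have "\<delta> \<notin> uminus ` (\<Delta> - J)"
  proof
    assume "\<delta> \<in> uminus ` (\<Delta> - J)"
    then obtain \<alpha> where \<alpha>: "\<alpha> \<in> \<Delta>" "\<alpha> \<notin> J" "\<delta> = - \<alpha>" by blast
    then have "v \<alpha> = - \<gamma>" using v\<delta> linear_neg linear_inj_refl_group[OF v_W] by (metis minus_minus)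
    then have "\<alpha> \<in> inv_set \<Phi> \<Delta> v"
      using simple_root_in_pos_roots[OF rs ss \<alpha>(1)] \<gamma>_pos unfolding inv_set_def neg_roots_def by auto
    with \<alpha> show False unfolding J_def by blast
  qed
  with \<delta>_neg show ?thesis unfolding \<delta>_def by blast
qed

end
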